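(* Let $A$ be a von Neumann algebra such that $\mathcal V(A)$ satisfies the descending chain condition: every chain $\cdots\subseteq C_3\subseteq C_2\subseteq C_1$ in $\mathcal V(A)$ stabilizes. Then the topological space $\Sigma^\ast$ is sober (every nonempty irreducible closed subset is the closure of a unique point). In particular, $\Sigma^\ast$ is sober whenever $A$ is finite-dimensional.
   Context: Let $A$ be a von Neumann algebra. $\mathcal{V}(A)$ denotes the set of abelian von Neumann subalgebras $C\subseteq A$ containing the unit of $A$, partially ordered by inclusion. For $C\in\mathcal V(A)$, $\Sigma_C$ denotes the Gelfand spectrum of $C$, with restriction maps $\lambda\mapsto\lambda|_D$ for $D\subseteq C$. Let $\Sigma=\{(C,\lambda)\mid C\in\mathcal V(A),\lambda\in\Sigma_C\}$ and $U_C=\{\lambda\mid(C,\lambda)\in U\}$ for $U\subseteq\Sigma$. The space $\Sigma^\ast$ is $\Sigma$ with the topology in which $U$ is open iff (1) each $U_C$ is open in $\Sigma_C$ and (2) $\lambda\in U_C$, $D\subseteq C$ imply $\lambda|_D\in U_D$. *)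

theory Defs
  imports "HOL-Analysis.Analysis"
begin

section \<open>Complex Hilbert spaces (carrier = the whole type 'h)\<close>

record 'h hspace =
  hadd   :: "'h \<Rightarrow> 'h \<Rightarrow> 'h"
  hscale :: "complex \<Rightarrow> 'h \<Rightarrow> 'h"
  hzero  :: "'h"
  hinner :: "'h \<Rightarrow> 'h \<Rightarrow> complex"

definition hnorm :: "'h hspace \<Rightarrow> 'h \<Rightarrow> real" where
  "hnorm H x = sqrt (Re (hinner H x x))"

definition hdiff :: "'h hspace \<Rightarrow> 'h \<Rightarrow> 'h \<Rightarrow> 'h" where
  "hdiff H x y = hadd H x (hscale H (-1) y)"

definition chilbert :: "'h hspace \<Rightarrow> bool" where
  "chilbert H \<longleftrightarrow>
     \<comment> \<open>complex vector space\<close>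
     (\<forall>x y z. hadd H (hadd H x y) z = hadd H x (hadd H y z)) \<and>
     (\<forall>x y. hadd H x y = hadd H y x) \<and>
     (\<forall>x. hadd H (hzero H) x = x) \<and>
     (\<forall>x. \<exists>y. hadd H x y = hzero H) \<and>
     (\<forall>a x y. hscale H a (hadd H x y) = hadd H (hscale H a x) (hscale H a y)) \<and>
     (\<forall>a b x. hscale H (a + b) x = hadd H (hscale H a x) (hscale H b x)) \<and>
     (\<forall>a b x. hscale H (a * b) x = hscale H a (hscale H b x)) \<and>
     (\<forall>x. hscale H 1 x = x) \<and>
     \<comment> \<open>inner product (linear in the first, conjugate-linear in the second argument)\<close>
     (\<forall>x y z. hinner H (hadd H x y) z = hinner H x z + hinner H y z) \<and>
     (\<forall>a x y. hinner H (hscale H a x) y = a * hinner H x y) \<and>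
     (\<forall>x y. hinner H y x = cnj (hinner H x y)) \<and>
     (\<forall>x. Re (hinner H x x) \<ge> 0) \<and>
     (\<forall>x. hinner H x x = 0 \<longrightarrow> x = hzero H) \<and>
     \<comment> \<open>completeness\<close>
     (\<forall>f :: nat \<Rightarrow> 'h.
        (\<forall>e>0. \<exists>N. \<forall>m\<ge>N. \<forall>n\<ge>N. hnorm H (hdiff H (f m) (f n)) < e) \<longrightarrow>
        (\<exists>x. (\<lambda>n. hnorm H (hdiff H (f n) x)) \<longlonglongrightarrow> 0))"

definition bop :: "'h hspace \<Rightarrow> ('h \<Rightarrow> 'h) set" where
  "bop H = {T. (\<forall>x y. T (hadd H x y) = hadd H (T x) (T y)) \<and>
               (\<forall>a x. T (hscale H a x) = hscale H a (T x)) \<and>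
               (\<exists>K. \<forall>x. hnorm H (T x) \<le> K * hnorm H x)}"

definition opadd :: "'h hspace \<Rightarrow> ('h \<Rightarrow> 'h) \<Rightarrow> ('h \<Rightarrow> 'h) \<Rightarrow> ('h \<Rightarrow> 'h)" where
  "opadd H S T = (\<lambda>x. hadd H (S x) (T x))"

definition opscale :: "'h hspace \<Rightarrow> complex \<Rightarrow> ('h \<Rightarrow> 'h) \<Rightarrow> ('h \<Rightarrow> 'h)" where
  "opscale H a T = (\<lambda>x. hscale H a (T x))"

definition adjoint :: "'h hspace \<Rightarrow> ('h \<Rightarrow> 'h) \<Rightarrow> ('h \<Rightarrow> 'h)" where
  "adjoint H T = (THE S. S \<in> bop H \<and> (\<forall>x y. hinner H (T x) y = hinner H x (S y)))"

definition commutant :: "'h hspace \<Rightarrow> ('h \<Rightarrow> 'h) set \<Rightarrow> ('h \<Rightarrow> 'h) set" where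
  "commutant H X = {T \<in> bop H. \<forall>S\<in>X. T \<circ> S = S \<circ> T}"

text \<open>A von Neumann algebra on H: a self-adjoint set of bounded operators equal to its
  double commutant (equivalently, a unital WOT-closed *-subalgebra of B(H)).\<close>
definition von_neumann_algebra :: "'h hspace \<Rightarrow> ('h \<Rightarrow> 'h) set \<Rightarrow> bool" where
  "von_neumann_algebra H M \<longleftrightarrow>
     M \<subseteq> bop H \<and> (\<forall>T\<in>M. adjoint H T \<in> M) \<and> commutant H (commutant H M) = M"

definition VA :: "'h hspace \<Rightarrow> ('h \<Rightarrow> 'h) set \<Rightarrow> ('h \<Rightarrow> 'h) set set" where
  "VA H A = {C. C \<subseteq> A \<and> von_neumann_algebra H C \<and> id \<in> C \<and>
                (\<forall>S\<in>C. \<forall>T\<in>C. S \<circ> T = T \<circ> S)}"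

inductive_set cspan :: "'h hspace \<Rightarrow> ('h \<Rightarrow> 'h) set \<Rightarrow> ('h \<Rightarrow> 'h) set"
  for H B where
  zero: "(\<lambda>x. hzero H) \<in> cspan H B"
| step: "b \<in> B \<Longrightarrow> T \<in> cspan H B \<Longrightarrow> opadd H (opscale H c b) T \<in> cspan H B"

definition finite_dimensional :: "'h hspace \<Rightarrow> ('h \<Rightarrow> 'h) set \<Rightarrow> bool" where
  "finite_dimensional H A \<longleftrightarrow> (\<exists>B. finite B \<and> B \<subseteq> A \<and> A \<subseteq> cspan H B)"

definition dcc_VA :: "'h hspace \<Rightarrow> ('h \<Rightarrow> 'h) set \<Rightarrow> bool" where
  "dcc_VA H A \<longleftrightarrow>
     (\<forall>Cs :: nat \<Rightarrow> ('h \<Rightarrow> 'h) set.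
        (\<forall>n. Cs n \<in> VA H A \<and> Cs (Suc n) \<subseteq> Cs n) \<longrightarrow> (\<exists>N. \<forall>n\<ge>N. Cs n = Cs N))"

text \<open>Characters of C (nonzero multiplicative linear functionals), as extensional
  functions on C; topologised with the weak-* topology (pointwise convergence on C).\<close>
definition gelfand :: "'h hspace \<Rightarrow> ('h \<Rightarrow> 'h) set \<Rightarrow> (('h \<Rightarrow> 'h) \<Rightarrow> complex) set" where
  "gelfand H C = {l \<in> extensional C.
      (\<forall>S\<in>C. \<forall>T\<in>C. l (opadd H S T) = l S + l T) \<and>
      (\<forall>a. \<forall>T\<in>C. l (opscale H a T) = a * l T) \<and>
      (\<forall>S\<in>C. \<forall>T\<in>C. l (S \<circ> T) = l S * l T) \<and>
      l id = 1}"

definition gelfand_top :: "'h hspace \<Rightarrow> ('h \<Rightarrow> 'h) set \<Rightarrow> (('h \<Rightarrow> 'h) \<Rightarrow> complex) topology" where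
  "gelfand_top H C = subtopology (product_topology (\<lambda>_. euclidean) C) (gelfand H C)"

definition Sigma_set :: "'h hspace \<Rightarrow> ('h \<Rightarrow> 'h) set
     \<Rightarrow> (('h \<Rightarrow> 'h) set \<times> (('h \<Rightarrow> 'h) \<Rightarrow> complex)) set" where
  "Sigma_set H A = (SIGMA C:VA H A. gelfand H C)"

definition slice :: "('c \<times> 'l) set \<Rightarrow> 'c \<Rightarrow> 'l set" where
  "slice U C = {l. (C, l) \<in> U}"

definition sigma_open :: "'h hspace \<Rightarrow> ('h \<Rightarrow> 'h) set
     \<Rightarrow> (('h \<Rightarrow> 'h) set \<times> (('h \<Rightarrow> 'h) \<Rightarrow> complex)) set \<Rightarrow> bool" where
  "sigma_open H A U \<longleftrightarrow>
     U \<subseteq> Sigma_set H A \<and>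
     (\<forall>C\<in>VA H A. openin (gelfand_top H C) (slice U C)) \<and>
     (\<forall>C l D. (C, l) \<in> U \<longrightarrow> D \<in> VA H A \<longrightarrow> D \<subseteq> C \<longrightarrow> (D, restrict l D) \<in> U)"

lemma sigma_openI:
  assumes "U \<subseteq> Sigma_set H A"
    and "\<And>C. C \<in> VA H A \<Longrightarrow> openin (gelfand_top H C) (slice U C)"
    and "\<And>C l D. (C, l) \<in> U \<Longrightarrow> D \<in> VA H A \<Longrightarrow> D \<subseteq> C \<Longrightarrow> (D, restrict l D) \<in> U"
  shows "sigma_open H A U"
  unfolding sigma_open_def
  by (intro conjI ballI allI impI assms(1)) (simp_all add: assms(2,3))

lemma sigma_openD:
  assumes "sigma_open H A U"
  shows "U \<subseteq> Sigma_set H A"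
    and "\<And>C. C \<in> VA H A \<Longrightarrow> openin (gelfand_top H C) (slice U C)"
    and "\<And>C l D. (C, l) \<in> U \<Longrightarrow> D \<in> VA H A \<Longrightarrow> D \<subseteq> C \<Longrightarrow> (D, restrict l D) \<in> U"
  using assms unfolding sigma_open_def by simp_all

lemma istopology_sigma_open: "istopology (sigma_open H A)"
  unfolding istopology_def
proof (intro conjI allI impI)
  fix S T assume S: "sigma_open H A S" and T: "sigma_open H A T"
  show "sigma_open H A (S \<inter> T)"
  proof (rule sigma_openI)
    show "S \<inter> T \<subseteq> Sigma_set H A" using sigma_openD(1)[OF S] by fast
  next
    fix C assume C: "C \<in> VA H A"
    have e: "slice (S \<inter> T) C = slice S C \<inter> slice T C" by (auto simp: slice_def)
    show "openin (gelfand_top H C) (slice (S \<inter> T) C)"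
      unfolding e by (rule openin_Int[OF sigma_openD(2)[OF S C] sigma_openD(2)[OF T C]])
  next
    fix C l D assume "(C, l) \<in> S \<inter> T" "D \<in> VA H A" "D \<subseteq> C"
    then show "(D, restrict l D) \<in> S \<inter> T"
      using sigma_openD(3)[OF S] sigma_openD(3)[OF T] by fast
  qed
next
  fix K assume K: "\<forall>S\<in>K. sigma_open H A S"
  show "sigma_open H A (\<Union>K)"
  proof (rule sigma_openI)
    show "\<Union>K \<subseteq> Sigma_set H A" using K sigma_openD(1) by fast
  next
    fix C assume C: "C \<in> VA H A"
    have e: "slice (\<Union>K) C = \<Union> ((\<lambda>S. slice S C) ` K)" by (auto simp: slice_def)
    show "openin (gelfand_top H C) (slice (\<Union>K) C)"
      unfolding e by (rule openin_Union) (use K sigma_openD(2)[OF _ C] in fast)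
  next
    fix C l D assume "(C, l) \<in> \<Union>K" "D \<in> VA H A" "D \<subseteq> C"
    then show "(D, restrict l D) \<in> \<Union>K"
      using K sigma_openD(3) by fast
  qed
qed

definition Sigma_star :: "'h hspace \<Rightarrow> ('h \<Rightarrow> 'h) set
     \<Rightarrow> (('h \<Rightarrow> 'h) set \<times> (('h \<Rightarrow> 'h) \<Rightarrow> complex)) topology" where
  "Sigma_star H A = topology (sigma_open H A)"

lemma openin_Sigma_star: "openin (Sigma_star H A) U \<longleftrightarrow> sigma_open H A U"
  by (simp add: Sigma_star_def istopology_sigma_open)

definition irreducible_in :: "'a topology \<Rightarrow> 'a set \<Rightarrow> bool" where
  "irreducible_in X F \<longleftrightarrow> F \<subseteq> topspace X \<and> F \<noteq> {} \<and>
     (\<forall>F1 F2. closedin X F1 \<longrightarrow> closedin X F2 \<longrightarrow> F \<subseteq> F1 \<union> F2 \<longrightarrow> F \<subseteq> F1 \<or> F \<subseteq> F2)"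

definition sober :: "'a topology \<Rightarrow> bool" where
  "sober X \<longleftrightarrow>
     (\<forall>F. closedin X F \<longrightarrow> irreducible_in X F \<longrightarrow>
        (\<exists>!x. x \<in> topspace X \<and> F = X closure_of {x}))"

end

theory Submission
  imports Defs "HOL-Library.Function_Algebras"
begin

text \<open>
  Open sets of Sigma* are closed under restriction to smaller contexts, so every downward
  closed family of contexts is open, and so is every "cone" of points whose restriction to a
  fixed context C lies in a fixed open subset of the Gelfand spectrum of C. With these open
  sets Sigma* is T0, hence generic points are unique. For existence, take a nonempty
  irreducible closed set F and (by the chain condition) a point (C, lambda) of F with C
  minimal among the contexts occurring in F. Irreducibility, applied to suitable pairs of the
  above open sets, shows that every point (E, mu) of F satisfies C \<subseteq> E and restrict mu C =
  lambda; hence F is the closure of (C, lambda).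

  The topological part relies on an algebraic fact: von Neumann algebras are closed under
  the linear operations and composition, so the restriction of a character to a subalgebra
  is again a character. Finally, a finite-dimensional A satisfies the chain condition, since
  a descending chain in V(A) induces a descending chain of subspaces of a finite-dimensional
  space of coefficient vectors.
\<close>

locale chilbert_space =
  fixes H :: "'h hspace"
  assumes ch: "chilbert H"
begin

lemma hadd_assoc: "hadd H (hadd H x y) z = hadd H x (hadd H y z)"
  using ch unfolding chilbert_def by (elim conjE allE) assumption
lemma hadd_comm: "hadd H x y = hadd H y x"
  using ch unfolding chilbert_def by (elim conjE allE) assumption
lemma hadd_0l [simp]: "hadd H (hzero H) x = x"
  using ch unfolding chilbert_def by (elim conjE allE) assumption
lemma hadd_inv: "\<exists>y. hadd H x y = hzero H"
  using ch unfolding chilbert_def by (elim conjE allE) assumption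
lemma hscale_addr: "hscale H a (hadd H x y) = hadd H (hscale H a x) (hscale H a y)"
  using ch unfolding chilbert_def by (elim conjE allE) assumption
lemma hscale_addl: "hscale H (a + b) x = hadd H (hscale H a x) (hscale H b x)"
  using ch unfolding chilbert_def by (elim conjE allE) assumption
lemma hscale_mult: "hscale H (a * b) x = hscale H a (hscale H b x)"
  using ch unfolding chilbert_def by (elim conjE allE) assumption
lemma hscale_1 [simp]: "hscale H 1 x = x"
  using ch unfolding chilbert_def by (elim conjE allE) assumption
lemma hinner_addl: "hinner H (hadd H x y) z = hinner H x z + hinner H y z"
  using ch unfolding chilbert_def by (elim conjE allE) assumption
lemma hinner_scalel: "hinner H (hscale H a x) y = a * hinner H x y"
  using ch unfolding chilbert_def by (elim conjE allE) assumption
lemma hinner_sym: "hinner H y x = cnj (hinner H x y)"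
  using ch unfolding chilbert_def by (elim conjE allE) assumption
lemma hinner_pos: "Re (hinner H x x) \<ge> 0"
  using ch unfolding chilbert_def by (elim conjE allE) assumption

lemma hadd_0r [simp]: "hadd H x (hzero H) = x"
  using hadd_comm hadd_0l by metis

lemma hadd_cancel:
  assumes "hadd H u v = hadd H u w"
  shows "v = w"
proof -
  obtain y where y: "hadd H u y = hzero H" using hadd_inv by blast
  have "hadd H y (hadd H u v) = hadd H y (hadd H u w)" using assms by simp
  then show ?thesis using y by (metis hadd_assoc hadd_comm hadd_0l)
qed

lemma hscale_0 [simp]: "hscale H 0 x = hzero H"
proof -
  have "hadd H (hscale H 0 x) (hscale H 0 x) = hadd H (hscale H 0 x) (hzero H)"
    using hscale_addl[of 0 0 x] by simp
  then show ?thesis by (rule hadd_cancel)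
qed

lemma hscale_zero [simp]: "hscale H a (hzero H) = hzero H"
  by (metis hscale_0 hscale_mult mult_zero_right)

lemma hinner_addr: "hinner H x (hadd H y z) = hinner H x y + hinner H x z"
  by (metis hinner_sym hinner_addl complex_cnj_add)
lemma hinner_scaler: "hinner H x (hscale H a y) = cnj a * hinner H x y"
  by (metis hinner_sym hinner_scalel complex_cnj_mult)

lemma hnorm_nonneg: "hnorm H x \<ge> 0"
  using hinner_pos by (simp add: hnorm_def)

lemma hnorm_sq: "(hnorm H x)\<^sup>2 = Re (hinner H x x)"
  by (simp add: hnorm_def hinner_pos)

lemma hnorm_scale: "hnorm H (hscale H a x) = cmod a * hnorm H x"
proof -
  have "hinner H (hscale H a x) (hscale H a x) = (a * cnj a) * hinner H x x"
    by (simp add: hinner_scalel hinner_scaler)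
  also have "a * cnj a = complex_of_real ((cmod a)\<^sup>2)"
    by (metis complex_norm_square of_real_power)
  finally have "Re (hinner H (hscale H a x) (hscale H a x)) = (cmod a)\<^sup>2 * Re (hinner H x x)"
    by simp
  then show ?thesis unfolding hnorm_def by (simp add: real_sqrt_mult)
qed

lemma hnorm_zero [simp]: "hnorm H (hzero H) = 0"
  using hnorm_scale[of 0 "hzero H"] by simp

text \<open>A parallelogram-type estimate, enough to bound the norm of a sum of operators.\<close>
lemma hnorm_add_sq: "(hnorm H (hadd H x y))\<^sup>2 \<le> 2 * (hnorm H x)\<^sup>2 + 2 * (hnorm H y)\<^sup>2"
proof -
  let ?m = "hscale H (-1) y"
  have sum: "hinner H (hadd H x y) (hadd H x y) =
      hinner H x x + hinner H x y + hinner H y x + hinner H y y"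
    by (simp add: hinner_addl hinner_addr)
  have diff: "hinner H (hadd H x ?m) (hadd H x ?m) =
      hinner H x x - hinner H x y - hinner H y x + hinner H y y"
    by (simp add: hinner_addl hinner_addr hinner_scalel hinner_scaler)
  have "Re (hinner H (hadd H x ?m) (hadd H x ?m)) \<ge> 0" by (rule hinner_pos)
  then show ?thesis unfolding hnorm_sq using sum diff by simp
qed

lemma bop_zero: "T \<in> bop H \<Longrightarrow> T (hzero H) = hzero H"
  unfolding bop_def by (metis (mono_tags, lifting) hscale_0 mem_Collect_eq)

lemma bop_nonneg_bound:
  assumes "T \<in> bop H"
  obtains K where "K \<ge> 0" "\<And>x. hnorm H (T x) \<le> K * hnorm H x"
proof -
  obtain K where K: "\<forall>x. hnorm H (T x) \<le> K * hnorm H x"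
    using assms unfolding bop_def by blast
  have "hnorm H (T x) \<le> max K 0 * hnorm H x" for x
    using K hnorm_nonneg by (meson max.cobounded1 mult_right_mono order_trans)
  then show thesis by (rule that[OF max.cobounded2])
qed

lemma bop_opadd:
  assumes "S \<in> bop H" "T \<in> bop H"
  shows "opadd H S T \<in> bop H"
proof -
  obtain K1 where K1: "K1 \<ge> 0" "\<And>x. hnorm H (S x) \<le> K1 * hnorm H x"
    using bop_nonneg_bound[OF assms(1)] by blast
  obtain K2 where K2: "K2 \<ge> 0" "\<And>x. hnorm H (T x) \<le> K2 * hnorm H x"
    using bop_nonneg_bound[OF assms(2)] by blast
  define K where "K = sqrt (2 * K1\<^sup>2 + 2 * K2\<^sup>2)"
  have "hnorm H (opadd H S T x) \<le> K * hnorm H x" for x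
  proof (rule power2_le_imp_le)
    have "(hnorm H (S x))\<^sup>2 \<le> (K1 * hnorm H x)\<^sup>2" "(hnorm H (T x))\<^sup>2 \<le> (K2 * hnorm H x)\<^sup>2"
      using K1 K2 hnorm_nonneg by (meson power_mono)+
    moreover have "(hnorm H (opadd H S T x))\<^sup>2 \<le> 2 * (hnorm H (S x))\<^sup>2 + 2 * (hnorm H (T x))\<^sup>2"
      unfolding opadd_def by (rule hnorm_add_sq)
    ultimately show "(hnorm H (opadd H S T x))\<^sup>2 \<le> (K * hnorm H x)\<^sup>2"
      unfolding K_def by (simp add: power_mult_distrib algebra_simps)
    show "0 \<le> K * hnorm H x" by (simp add: K_def hnorm_nonneg)
  qed
  moreover have "opadd H S T (hadd H x y) = hadd H (opadd H S T x) (opadd H S T y)" for x y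
    using assms unfolding bop_def opadd_def by (simp add: hadd_assoc) (metis hadd_assoc hadd_comm)
  moreover have "opadd H S T (hscale H a x) = hscale H a (opadd H S T x)" for a x
    using assms unfolding bop_def opadd_def by (simp add: hscale_addr)
  ultimately show ?thesis unfolding bop_def by blast
qed

lemma bop_opscale:
  assumes "T \<in> bop H"
  shows "opscale H a T \<in> bop H"
proof -
  obtain K where K: "K \<ge> 0" "\<And>x. hnorm H (T x) \<le> K * hnorm H x"
    using bop_nonneg_bound[OF assms] by blast
  have "hnorm H (opscale H a T x) \<le> (cmod a * K) * hnorm H x" for x
    unfolding opscale_def hnorm_scale using K by (simp add: mult.assoc mult_left_mono)
  moreover have "opscale H a T (hadd H x y) = hadd H (opscale H a T x) (opscale H a T y)" for x y
    using assms unfolding bop_def opscale_def by (simp add: hscale_addr)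
  moreover have "opscale H a T (hscale H b x) = hscale H b (opscale H a T x)" for b x
    using assms unfolding bop_def opscale_def by (simp flip: hscale_mult add: mult.commute)
  ultimately show ?thesis unfolding bop_def by blast
qed

lemma bop_comp:
  assumes "S \<in> bop H" "T \<in> bop H"
  shows "S \<circ> T \<in> bop H"
proof -
  obtain K1 where K1: "K1 \<ge> 0" "\<And>x. hnorm H (S x) \<le> K1 * hnorm H x"
    using bop_nonneg_bound[OF assms(1)] by blast
  obtain K2 where K2: "\<And>x. hnorm H (T x) \<le> K2 * hnorm H x"
    using bop_nonneg_bound[OF assms(2)] by blast
  have "hnorm H ((S \<circ> T) x) \<le> (K1 * K2) * hnorm H x" for x
  proof -
    have "hnorm H (S (T x)) \<le> K1 * hnorm H (T x)" using K1 by blast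
    also have "\<dots> \<le> K1 * (K2 * hnorm H x)" using K1 K2 by (simp add: mult_left_mono)
    finally show ?thesis by (simp add: mult.assoc)
  qed
  then show ?thesis using assms unfolding bop_def by auto
qed

lemma bop_zero_op: "(\<lambda>x. hzero H) \<in> bop H"
  unfolding bop_def using hnorm_nonneg by (auto intro!: exI[of _ 0])

text \<open>A commutant is closed under sums, scalar multiples, composition, and contains 0; since a
  von Neumann algebra is its own double commutant, it inherits these closure properties.\<close>
lemma commutant_closed:
  assumes "X \<subseteq> bop H"
  shows "S \<in> commutant H X \<Longrightarrow> T \<in> commutant H X \<Longrightarrow> opadd H S T \<in> commutant H X"
    and "T \<in> commutant H X \<Longrightarrow> opscale H a T \<in> commutant H X"
    and "S \<in> commutant H X \<Longrightarrow> T \<in> commutant H X \<Longrightarrow> S \<circ> T \<in> commutant H X"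
    and "(\<lambda>x. hzero H) \<in> commutant H X"
proof -
  have lin: "R (hadd H x y) = hadd H (R x) (R y)" "R (hscale H a x) = hscale H a (R x)"
    if "R \<in> X" for R x y a
    using assms that unfolding bop_def by auto
  show "opadd H S T \<in> commutant H X" if "S \<in> commutant H X" "T \<in> commutant H X"
    using that lin(1) bop_opadd unfolding commutant_def opadd_def
    by (auto simp: fun_eq_iff)
  show "opscale H a T \<in> commutant H X" if "T \<in> commutant H X"
    using that lin(2) bop_opscale unfolding commutant_def opscale_def
    by (auto simp: fun_eq_iff)
  show "S \<circ> T \<in> commutant H X" if "S \<in> commutant H X" "T \<in> commutant H X"
    using that bop_comp unfolding commutant_def by (auto simp: comp_assoc) (metis comp_assoc)
  show "(\<lambda>x. hzero H) \<in> commutant H X"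
    using assms bop_zero_op unfolding commutant_def
    by (auto simp: fun_eq_iff) (metis bop_zero subsetD)
qed

lemma vna_closed:
  assumes "von_neumann_algebra H M"
  shows "S \<in> M \<Longrightarrow> T \<in> M \<Longrightarrow> opadd H S T \<in> M"
    and "T \<in> M \<Longrightarrow> opscale H a T \<in> M"
    and "S \<in> M \<Longrightarrow> T \<in> M \<Longrightarrow> S \<circ> T \<in> M"
    and "(\<lambda>x. hzero H) \<in> M"
proof -
  have "commutant H M \<subseteq> bop H" unfolding commutant_def by auto
  note cl = commutant_closed[OF this]
  have M: "commutant H (commutant H M) = M" using assms unfolding von_neumann_algebra_def by blast
  show "S \<in> M \<Longrightarrow> T \<in> M \<Longrightarrow> opadd H S T \<in> M" using cl(1) unfolding M .
  show "T \<in> M \<Longrightarrow> opscale H a T \<in> M" using cl(2) unfolding M .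
  show "S \<in> M \<Longrightarrow> T \<in> M \<Longrightarrow> S \<circ> T \<in> M" using cl(3) unfolding M .
  show "(\<lambda>x. hzero H) \<in> M" using cl(4) unfolding M .
qed

text \<open>Restricting a character of C to a context D \<subseteq> C gives a character of D; this is what
  makes the restriction condition in the definition of open sets of Sigma* meaningful.\<close>
lemma restrict_gelfand:
  assumes "D \<in> VA H A" "l \<in> gelfand H C" "D \<subseteq> C"
  shows "restrict l D \<in> gelfand H D"
proof -
  have D: "von_neumann_algebra H D" "id \<in> D" using assms(1) unfolding VA_def by auto
  show ?thesis using assms(2,3) vna_closed[OF D(1)] D(2) unfolding gelfand_def
    by (auto simp: subset_iff)
qed

lemma restrict_gelfand_self: "l \<in> gelfand H C \<Longrightarrow> restrict l C = l"
  unfolding gelfand_def by (simp add: extensional_restrict)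

lemma topspace_gelfand [simp]: "topspace (gelfand_top H C) = gelfand H C"
  unfolding gelfand_top_def gelfand_def by (auto simp: PiE_def)

lemma mem_Sigma_set: "(C, l) \<in> Sigma_set H A \<longleftrightarrow> C \<in> VA H A \<and> l \<in> gelfand H C"
  unfolding Sigma_set_def by auto

lemma topspace_Sigma_star: "topspace (Sigma_star H A) = Sigma_set H A"
proof -
  have "sigma_open H A (Sigma_set H A)"
  proof (rule sigma_openI)
    fix C assume "C \<in> VA H A"
    then have "slice (Sigma_set H A) C = topspace (gelfand_top H C)"
      by (auto simp: slice_def mem_Sigma_set)
    then show "openin (gelfand_top H C) (slice (Sigma_set H A) C)" by (simp del: topspace_gelfand)
  qed (auto simp: mem_Sigma_set intro: restrict_gelfand)
  then show ?thesis
    unfolding topspace_def openin_Sigma_star using sigma_openD(1) by blast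
qed

lemma continuous_map_restrict:
  assumes "C \<in> VA H A" "C \<subseteq> E"
  shows "continuous_map (gelfand_top H E) (gelfand_top H C) (\<lambda>\<mu>. restrict \<mu> C)"
proof -
  have "continuous_map (gelfand_top H E) euclidean (\<lambda>\<mu>. \<mu> k)" if "k \<in> C" for k
    unfolding gelfand_top_def using assms(2) that
    by (intro continuous_map_from_subtopology continuous_map_product_projection) auto
  then have "continuous_map (gelfand_top H E) (product_topology (\<lambda>_. euclidean) C)
      (\<lambda>\<mu>. restrict \<mu> C)"
    by (auto simp: continuous_map_componentwise)
  moreover have "restrict \<mu> C \<in> gelfand H C" if "\<mu> \<in> topspace (gelfand_top H E)" for \<mu>
    using that assms restrict_gelfand by auto
  ultimately show ?thesis
    unfolding gelfand_top_def[of H C] by (auto simp: continuous_map_in_subtopology)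
qed

lemma Hausdorff_gelfand: "Hausdorff_space (gelfand_top H C)"
  unfolding gelfand_top_def
  by (intro Hausdorff_space_subtopology) (simp add: Hausdorff_space_product_topology)

lemma openin_Sigma_star_downset:
  assumes down: "\<And>C D. P C \<Longrightarrow> D \<in> VA H A \<Longrightarrow> D \<subseteq> C \<Longrightarrow> P D"
  shows "openin (Sigma_star H A) {p \<in> Sigma_set H A. P (fst p)}"
  unfolding openin_Sigma_star
proof (rule sigma_openI)
  fix C assume C: "C \<in> VA H A"
  have "slice {p \<in> Sigma_set H A. P (fst p)} C = (if P C then topspace (gelfand_top H C) else {})"
    using C by (auto simp: slice_def mem_Sigma_set)
  then show "openin (gelfand_top H C) (slice {p \<in> Sigma_set H A. P (fst p)} C)"
    by (simp del: topspace_gelfand)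
qed (auto simp: mem_Sigma_set intro: restrict_gelfand down)

lemma openin_Sigma_star_cone:
  assumes C0: "C0 \<in> VA H A" and U: "openin (gelfand_top H C0) U"
  shows "openin (Sigma_star H A)
           {p \<in> Sigma_set H A. C0 \<subseteq> fst p \<longrightarrow> restrict (snd p) C0 \<in> U}"
    (is "openin _ ?V")
  unfolding openin_Sigma_star
proof (rule sigma_openI)
  fix C assume C: "C \<in> VA H A"
  show "openin (gelfand_top H C) (slice ?V C)"
  proof (cases "C0 \<subseteq> C")
    case True
    then have "slice ?V C = {\<mu> \<in> topspace (gelfand_top H C). restrict \<mu> C0 \<in> U}"
      using C by (auto simp: slice_def mem_Sigma_set)
    then show ?thesis
      using openin_continuous_map_preimage[OF continuous_map_restrict[OF C0 True] U] by simp
  next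
    case False
    then have "slice ?V C = topspace (gelfand_top H C)"
      using C by (auto simp: slice_def mem_Sigma_set)
    then show ?thesis by (simp del: topspace_gelfand)
  qed
next
  fix C l D assume Cl: "(C, l) \<in> ?V" and D: "D \<in> VA H A" "D \<subseteq> C"
  then have "(D, restrict l D) \<in> Sigma_set H A"
    by (auto simp: mem_Sigma_set intro: restrict_gelfand)
  moreover have "restrict (restrict l D) C0 = restrict l C0" if "C0 \<subseteq> D"
    using that by (simp add: Int_absorb1)
  ultimately show "(D, restrict l D) \<in> ?V" using Cl D by auto
qed auto

text \<open>Distinct points of Sigma* are topologically distinguishable: different contexts are
  separated by a downward closed set, different characters on the same context by a cone.\<close>
lemma t0_Sigma_star: "t0_space (Sigma_star H A)"
  unfolding t0_space_def topspace_Sigma_star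
proof (intro ballI impI)
  fix x y assume x: "x \<in> Sigma_set H A" and y: "y \<in> Sigma_set H A" and "x \<noteq> y"
  obtain C l D m where xy: "x = (C, l)" "y = (D, m)" by fastforce
  show "\<exists>U. openin (Sigma_star H A) U \<and> (x \<notin> U \<longleftrightarrow> y \<in> U)"
  proof (cases "C = D")
    case True
    have C: "C \<in> VA H A" "l \<in> gelfand H C" "m \<in> gelfand H C" "l \<noteq> m"
      using x y xy True \<open>x \<noteq> y\<close> by (auto simp: mem_Sigma_set)
    then obtain U1 U2 where U: "openin (gelfand_top H C) U1" "openin (gelfand_top H C) U2"
      "l \<in> U1" "m \<in> U2" "disjnt U1 U2"
      using Hausdorff_gelfand[of C] unfolding Hausdorff_space_def by (metis topspace_gelfand)
    let ?V = "{p \<in> Sigma_set H A. C \<subseteq> fst p \<longrightarrow> restrict (snd p) C \<in> U1}"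
    have "x \<in> ?V" "y \<notin> ?V"
      using x xy True C(2,3) U(3-5) by (auto simp: restrict_gelfand_self disjnt_iff)
    then show ?thesis using openin_Sigma_star_cone[OF C(1) U(1)] by blast
  next
    case False
    then consider "\<not> D \<subseteq> C" | "\<not> C \<subseteq> D" by blast
    then show ?thesis
    proof cases
      case 1
      have "x \<in> {p \<in> Sigma_set H A. fst p \<subseteq> C}" "y \<notin> {p \<in> Sigma_set H A. fst p \<subseteq> C}"
        using x xy 1 by auto
      then show ?thesis using openin_Sigma_star_downset[of "\<lambda>E. E \<subseteq> C"] by blast
    next
      case 2
      have "y \<in> {p \<in> Sigma_set H A. fst p \<subseteq> D}" "x \<notin> {p \<in> Sigma_set H A. fst p \<subseteq> D}"
        using y xy 2 by auto
      then show ?thesis using openin_Sigma_star_downset[of "\<lambda>E. E \<subseteq> D"] by blast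
    qed
  qed
qed

end

lemma irreducible_in_open_meet:
  assumes irr: "irreducible_in X F" and U: "openin X U" and V: "openin X V"
    and "F \<inter> U \<noteq> {}" "F \<inter> V \<noteq> {}"
  shows "F \<inter> U \<inter> V \<noteq> {}"
proof
  assume disj: "F \<inter> U \<inter> V = {}"
  have FX: "F \<subseteq> topspace X" using irr unfolding irreducible_in_def by blast
  have "F \<subseteq> (topspace X - U) \<union> (topspace X - V)" using FX disj by blast
  moreover have "closedin X (topspace X - U)" "closedin X (topspace X - V)"
    using U V by (simp_all add: closedin_diff)
  ultimately have "F \<subseteq> topspace X - U \<or> F \<subseteq> topspace X - V"
    using irr unfolding irreducible_in_def by (elim conjE) blast
  then show False using \<open>F \<inter> U \<noteq> {}\<close> \<open>F \<inter> V \<noteq> {}\<close> by blast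
qed

text \<open>In a T0 space generic points are unique, so sobriety reduces to their existence.\<close>
lemma sober_if_t0_generic_points:
  assumes t0: "t0_space X"
    and generic: "\<And>F. closedin X F \<Longrightarrow> irreducible_in X F \<Longrightarrow> \<exists>x\<in>topspace X. F = X closure_of {x}"
  shows "sober X"
  unfolding sober_def
proof (intro allI impI)
  fix F assume "closedin X F" "irreducible_in X F"
  then obtain x where x: "x \<in> topspace X" "F = X closure_of {x}" using generic by blast
  have "y = x" if "y \<in> topspace X" "F = X closure_of {y}" for y
    using t0 that x unfolding t0_space_closure_of_sing by metis
  then show "\<exists>!x. x \<in> topspace X \<and> F = X closure_of {x}"
    using x by blast
qed

context chilbert_space
begin

text \<open>Throughout, F is an irreducible closed subset of Sigma* and (C0, lam) a point of F whose
  context C0 is minimal among the contexts of points of F; we show it is a generic point.\<close>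
context
  fixes A :: "('h \<Rightarrow> 'h) set" and F C0 lam
  assumes closed: "closedin (Sigma_star H A) F"
    and irr: "irreducible_in (Sigma_star H A) F"
    and gen: "(C0, lam) \<in> F"
    and minimal: "\<And>D. D \<in> fst ` F \<Longrightarrow> D \<subseteq> C0 \<Longrightarrow> D = C0"
begin

lemma F_subset_Sigma: "F \<subseteq> Sigma_set H A"
  using closedin_subset[OF closed] by (simp add: topspace_Sigma_star)

lemma C0_in_VA: "C0 \<in> VA H A" and lam_in_gelfand: "lam \<in> gelfand H C0"
  using gen F_subset_Sigma by (auto simp: mem_Sigma_set)

text \<open>Every context occurring in F contains C0: otherwise the open sets "context does not
  contain C0" and "no context of F below the context fails to contain C0" both meet F but
  have no common point in F.\<close>
lemma generic_context_below:
  assumes "(E, \<mu>) \<in> F"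
  shows "C0 \<subseteq> E"
proof (rule ccontr)
  assume E: "\<not> C0 \<subseteq> E"
  define O1 where "O1 = {p \<in> Sigma_set H A. \<not> C0 \<subseteq> fst p}"
  define O2 where "O2 = {p \<in> Sigma_set H A. \<forall>D\<in>fst ` F. D \<subseteq> fst p \<longrightarrow> C0 \<subseteq> D}"
  have "openin (Sigma_star H A) O1" "openin (Sigma_star H A) O2"
    unfolding O1_def O2_def by (rule openin_Sigma_star_downset, blast)+
  moreover have "(E, \<mu>) \<in> F \<inter> O1" using assms E F_subset_Sigma by (auto simp: O1_def)
  moreover have "(C0, lam) \<in> F \<inter> O2" using gen minimal F_subset_Sigma by (auto simp: O2_def)
  ultimately obtain p where "p \<in> F \<inter> O1 \<inter> O2"
    using irreducible_in_open_meet[OF irr] by blast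
  then show False unfolding O1_def O2_def by auto
qed

text \<open>All characters occurring in F restrict to lam on C0: otherwise cones over disjoint
  neighbourhoods of the two characters both meet F, but no point of F lies in both.\<close>
lemma generic_restrict:
  assumes "(E, \<mu>) \<in> F"
  shows "restrict \<mu> C0 = lam"
proof (rule ccontr)
  assume ne: "restrict \<mu> C0 \<noteq> lam"
  have sub: "C0 \<subseteq> E" using generic_context_below[OF assms] .
  have "restrict \<mu> C0 \<in> gelfand H C0"
    using assms F_subset_Sigma restrict_gelfand[OF C0_in_VA _ sub] by (auto simp: mem_Sigma_set)
  then obtain U1 U2 where U: "openin (gelfand_top H C0) U1" "openin (gelfand_top H C0) U2"
    "restrict \<mu> C0 \<in> U1" "lam \<in> U2" "disjnt U1 U2"
    using Hausdorff_gelfand[of C0] lam_in_gelfand ne unfolding Hausdorff_space_def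
    by (metis topspace_gelfand)
  define O1 where "O1 = {p \<in> Sigma_set H A. C0 \<subseteq> fst p \<longrightarrow> restrict (snd p) C0 \<in> U1}"
  define O2 where "O2 = {p \<in> Sigma_set H A. C0 \<subseteq> fst p \<longrightarrow> restrict (snd p) C0 \<in> U2}"
  have "openin (Sigma_star H A) O1" "openin (Sigma_star H A) O2"
    unfolding O1_def O2_def using openin_Sigma_star_cone[OF C0_in_VA] U(1,2) by blast+
  moreover have "(E, \<mu>) \<in> F \<inter> O1" using assms U(3) F_subset_Sigma by (auto simp: O1_def)
  moreover have "(C0, lam) \<in> F \<inter> O2"
    using gen U(4) F_subset_Sigma lam_in_gelfand by (auto simp: O2_def restrict_gelfand_self)
  ultimately obtain p where p: "p \<in> F \<inter> O1 \<inter> O2"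
    using irreducible_in_open_meet[OF irr] by blast
  then have "C0 \<subseteq> fst p" using generic_context_below by (metis IntD1 prod.collapse)
  then show False using p U(5) unfolding O1_def O2_def disjnt_def by blast
qed

text \<open>Hence every open set containing a point of F contains (C0, lam), by restriction.\<close>
lemma generic_closure: "F = Sigma_star H A closure_of {(C0, lam)}"
proof
  show "Sigma_star H A closure_of {(C0, lam)} \<subseteq> F"
    using closure_of_minimal[OF _ closed] gen by blast
  show "F \<subseteq> Sigma_star H A closure_of {(C0, lam)}"
  proof
    fix p assume pF: "p \<in> F"
    obtain E \<mu> where p: "p = (E, \<mu>)" by fastforce
    have "(C0, lam) \<in> T" if "p \<in> T" "openin (Sigma_star H A) T" for T
      using sigma_openD(3)[of H A T E \<mu> C0] that pF p C0_in_VA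
        generic_context_below generic_restrict
      by (simp add: openin_Sigma_star)
    then show "p \<in> Sigma_star H A closure_of {(C0, lam)}"
      using pF F_subset_Sigma by (auto simp: in_closure_of topspace_Sigma_star)
  qed
qed

end

lemma sober_if_minimal_contexts:
  assumes minimal: "\<And>M. M \<subseteq> VA H A \<Longrightarrow> M \<noteq> {} \<Longrightarrow> \<exists>C\<in>M. \<forall>D\<in>M. D \<subseteq> C \<longrightarrow> D = C"
  shows "sober (Sigma_star H A)"
proof (rule sober_if_t0_generic_points[OF t0_Sigma_star])
  fix F assume closed: "closedin (Sigma_star H A) F" and irr: "irreducible_in (Sigma_star H A) F"
  have FS: "F \<subseteq> Sigma_set H A"
    using closedin_subset[OF closed] by (simp add: topspace_Sigma_star)
  have "fst ` F \<subseteq> VA H A" using FS unfolding Sigma_set_def by auto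
  moreover have "fst ` F \<noteq> {}" using irr unfolding irreducible_in_def by blast
  ultimately obtain C0 where C0: "C0 \<in> fst ` F" "\<And>D. D \<in> fst ` F \<Longrightarrow> D \<subseteq> C0 \<Longrightarrow> D = C0"
    using minimal by meson
  then obtain lam where gen: "(C0, lam) \<in> F" by force
  have "(C0, lam) \<in> topspace (Sigma_star H A)" using gen FS by (simp add: topspace_Sigma_star subsetD)
  then show "\<exists>x\<in>topspace (Sigma_star H A). F = Sigma_star H A closure_of {x}"
    using generic_closure[OF closed irr gen C0(2)] by blast
qed
end

lemma dcc_VA_minimal:
  assumes dcc: "dcc_VA H A" and MV: "M \<subseteq> VA H A" and Mne: "M \<noteq> {}"
  shows "\<exists>C\<in>M. \<forall>D\<in>M. D \<subseteq> C \<longrightarrow> D = C"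
proof (rule ccontr)
  assume "\<not> ?thesis"
  then obtain g where g: "\<And>C. C \<in> M \<Longrightarrow> g C \<in> M \<and> g C \<subseteq> C \<and> g C \<noteq> C" by metis
  obtain C0 where C0: "C0 \<in> M" using Mne by blast
  define Cs where "Cs n = (g ^^ n) C0" for n
  have CsM: "Cs n \<in> M" for n
    by (induction n) (simp_all add: Cs_def C0 g)
  have step: "Cs (Suc n) = g (Cs n)" for n by (simp add: Cs_def)
  have "\<forall>n. Cs n \<in> VA H A \<and> Cs (Suc n) \<subseteq> Cs n"
    using CsM MV g step by auto
  then obtain N where "\<forall>n\<ge>N. Cs n = Cs N"
    using dcc unfolding dcc_VA_def by blast
  then have "g (Cs N) = Cs N" using step[of N] by (metis le_SucI order_refl)
  then show False using g[OF CsM[of N]] by simp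
qed

text \<open>Complex-valued functions form a complex vector space; finitely supported ones serve
  as coefficient vectors for linear combinations of operators.\<close>
interpretation coeff: vector_space "\<lambda>(c::complex) (f::'b \<Rightarrow> complex). (\<lambda>x. c * f x)"
  by unfold_locales (auto simp: fun_eq_iff algebra_simps)

context vector_space
begin

lemma dim_mono_span:
  assumes "S \<subseteq> T" "T \<subseteq> span W" "finite W"
  shows "dim S \<le> dim T"
proof -
  obtain B where B: "B \<subseteq> T" "independent B" "T \<subseteq> span B" "card B = dim T"
    using basis_exists[of T] by metis
  have "finite B" using independent_span_bound[OF assms(3) B(2)] B(1) assms(2) by blast
  then show ?thesis using dim_le_card[of S B] assms(1) B(3,4) by auto
qed

lemma subspace_eq_if_dim_le:
  assumes "subspace S" "S \<subseteq> T" "T \<subseteq> span W" "finite W" "dim T \<le> dim S"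
  shows "S = T"
proof (rule ccontr)
  assume "S \<noteq> T"
  then obtain t where t: "t \<in> T" "t \<notin> S" using assms(2) by blast
  obtain B where B: "B \<subseteq> S" "independent B" "S \<subseteq> span B" "card B = dim S"
    using basis_exists[of S] by metis
  have "finite B" using independent_span_bound[OF assms(4) B(2)] B(1) assms(2,3) by blast
  have "t \<notin> span B" using t(2) span_minimal[OF B(1) assms(1)] by blast
  then have "independent (insert t B)" "t \<notin> B"
    using independent_insertI B(2) span_superset by blast+
  then have "dim (insert t B) = Suc (dim S)"
    using dim_eq_card_independent \<open>finite B\<close> B(4) by simp
  moreover have "dim (insert t B) \<le> dim T"
    using dim_mono_span[of "insert t B" T W] t(1) B(1) assms(2,3,4) by blast
  ultimately show False using assms(5) by simp
qed

lemma decreasing_subspaces_stabilise: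
  assumes "\<And>n. subspace (Q n)" "\<And>n. Q (Suc n) \<subseteq> Q n" "\<And>n. Q n \<subseteq> span W" "finite W"
  shows "\<exists>N. \<forall>n\<ge>N. Q n = Q N"
proof -
  obtain N where N: "\<And>n. dim (Q N) \<le> dim (Q n)"
    using ex_has_least_nat[of "\<lambda>_. True" 0 "\<lambda>n. dim (Q n)"] by blast
  have "Q n = Q N" if "n \<ge> N" for n
    using subspace_eq_if_dim_le[OF assms(1) lift_Suc_antimono_le[of Q, OF assms(2) that]
        assms(3,4) N] .
  then show ?thesis by blast
qed

end

definition lincomb :: "'h hspace \<Rightarrow> ('h \<Rightarrow> 'h) list \<Rightarrow> (('h \<Rightarrow> 'h) \<Rightarrow> complex) \<Rightarrow> ('h \<Rightarrow> 'h)" where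
  "lincomb H bs c = foldr (\<lambda>b T. opadd H (opscale H (c b) b) T) bs (\<lambda>x. hzero H)"

lemma lincomb_Nil [simp]: "lincomb H [] c = (\<lambda>x. hzero H)"
  by (simp add: lincomb_def)

lemma lincomb_Cons [simp]: "lincomb H (b # bs) c = opadd H (opscale H (c b) b) (lincomb H bs c)"
  by (simp add: lincomb_def)

lemma lincomb_cong: "(\<And>x. x \<in> set bs \<Longrightarrow> c x = d x) \<Longrightarrow> lincomb H bs c = lincomb H bs d"
  by (induction bs) auto

lemma sum_apply_fun: "finite B \<Longrightarrow> (\<Sum>b\<in>B. f b) x = (\<Sum>b\<in>B. f b x)"
  by (induction B rule: finite_induct) auto

lemma supported_in_span_deltas:
  assumes "finite B" "\<And>x. x \<notin> B \<Longrightarrow> c x = 0"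
  shows "c \<in> coeff.span ((\<lambda>b x. if x = b then 1 else 0) ` B)"
proof -
  let ?\<delta> = "\<lambda>b x. if x = b then (1::complex) else 0"
  have "c = (\<Sum>b\<in>B. (\<lambda>x. c b * ?\<delta> b x))"
  proof
    fix x
    have "(\<Sum>b\<in>B. c b * ?\<delta> b x) = (\<Sum>b\<in>B. if x = b then c x else 0)"
      by (rule sum.cong) auto
    also have "\<dots> = c x" using assms by (simp add: sum.delta)
    finally show "c x = (\<Sum>b\<in>B. (\<lambda>x. c b * ?\<delta> b x)) x"
      by (simp add: sum_apply_fun assms(1))
  qed
  also have "\<dots> \<in> coeff.span (?\<delta> ` B)"
    by (intro coeff.span_sum coeff.span_scale coeff.span_base) auto
  finally show ?thesis .
qed

context chilbert_space
begin

lemma lincomb_add: "lincomb H bs (c + d) = opadd H (lincomb H bs c) (lincomb H bs d)"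
proof (induction bs)
  case Nil then show ?case by (simp add: opadd_def)
next
  case (Cons b bs)
  have swap: "opadd H (opadd H S T) (opadd H S' T') = opadd H (opadd H S S') (opadd H T T')"
    for S T S' T'
    unfolding opadd_def fun_eq_iff by (metis hadd_assoc hadd_comm)
  have "opscale H ((c + d) b) b = opadd H (opscale H (c b) b) (opscale H (d b) b)"
    by (simp add: opscale_def opadd_def fun_eq_iff hscale_addl)
  then show ?case using Cons by (simp add: swap)
qed

lemma lincomb_scale: "lincomb H bs (\<lambda>x. a * c x) = opscale H a (lincomb H bs c)"
  by (induction bs) (simp_all add: opscale_def opadd_def fun_eq_iff hscale_addr hscale_mult)

lemma lincomb_zero: "lincomb H bs (\<lambda>x. 0) = (\<lambda>x. hzero H)"
  using lincomb_scale[of bs 0 "\<lambda>x. 0"] by (simp add: opscale_def)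

lemma lincomb_delta:
  assumes "distinct bs" "b \<in> set bs"
  shows "lincomb H bs (\<lambda>x. if x = b then 1 else 0) = b"
  using assms
proof (induction bs)
  case (Cons b' bs)
  show ?case
  proof (cases "b' = b")
    case True
    then have "lincomb H bs (\<lambda>x. if x = b then 1 else 0) = lincomb H bs (\<lambda>x. 0)"
      using Cons.prems by (intro lincomb_cong) auto
    then show ?thesis using True by (simp add: lincomb_zero opadd_def opscale_def)
  next
    case False
    then show ?thesis using Cons by (simp add: opadd_def opscale_def)
  qed
qed simp

lemma cspan_lincomb:
  assumes "T \<in> cspan H B" "distinct bs" "set bs = B"
  shows "\<exists>c. (\<forall>x. x \<notin> B \<longrightarrow> c x = 0) \<and> lincomb H bs c = T"
  using assms(1)
proof (induction rule: cspan.induct)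
  case zero
  show ?case by (rule exI[of _ "\<lambda>x. 0"]) (simp add: lincomb_zero)
next
  case (step b T a)
  then obtain d where d: "\<forall>x. x \<notin> B \<longrightarrow> d x = 0" "lincomb H bs d = T" by blast
  define c where "c = d + (\<lambda>x. a * (if x = b then 1 else 0))"
  have "lincomb H bs c = opadd H T (opscale H a b)"
    unfolding c_def lincomb_add lincomb_scale using lincomb_delta assms(2,3) step(1) d(2) by simp
  also have "\<dots> = opadd H (opscale H a b) T"
    unfolding opadd_def by (simp add: fun_eq_iff hadd_comm)
  finally have "lincomb H bs c = opadd H (opscale H a b) T" .
  moreover have "\<forall>x. x \<notin> B \<longrightarrow> c x = 0" using d(1) step(1) by (auto simp: c_def)
  ultimately show ?case by blast
qed

text \<open>A descending chain in V(A) is mirrored by the descending chain of subspaces of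
  coefficient vectors (supported on a finite spanning set B) whose operators lie in the chain;
  the latter stabilises, and since every element of A has such a coefficient vector, so does
  the former.\<close>
lemma finite_dimensional_dcc:
  assumes fd: "finite_dimensional H A"
  shows "dcc_VA H A"
  unfolding dcc_VA_def
proof (intro allI impI)
  fix Cs :: "nat \<Rightarrow> ('h \<Rightarrow> 'h) set"
  assume Cs: "\<forall>n. Cs n \<in> VA H A \<and> Cs (Suc n) \<subseteq> Cs n"
  obtain B where B: "finite B" "A \<subseteq> cspan H B" using fd unfolding finite_dimensional_def by blast
  obtain bs where bs: "distinct bs" "set bs = B" using finite_distinct_list[OF B(1)] by blast
  define Q where "Q n = {c. (\<forall>x. x \<notin> B \<longrightarrow> c x = 0) \<and> lincomb H bs c \<in> Cs n}" for n
  have vna: "von_neumann_algebra H (Cs n)" for n using Cs unfolding VA_def by blast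
  have "coeff.subspace (Q n)" for n
    unfolding coeff.subspace_def Q_def
    using vna_closed[OF vna] lincomb_zero lincomb_add lincomb_scale by (simp add: zero_fun_def)
  moreover have "Q (Suc n) \<subseteq> Q n" for n using Cs unfolding Q_def by blast
  moreover have "Q n \<subseteq> coeff.span ((\<lambda>b x. if x = b then 1 else 0) ` B)" for n
    using supported_in_span_deltas[OF B(1)] unfolding Q_def by blast
  ultimately obtain N where N: "\<forall>n\<ge>N. Q n = Q N"
    using coeff.decreasing_subspaces_stabilise B(1) by (metis finite_imageI)
  have "Cs n = Cs N" if "n \<ge> N" for n
  proof
    show "Cs n \<subseteq> Cs N" using lift_Suc_antimono_le[of Cs, OF _ that] Cs by blast
    show "Cs N \<subseteq> Cs n"
    proof
      fix T assume T: "T \<in> Cs N"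
      then have "T \<in> cspan H B" using Cs B(2) unfolding VA_def by blast
      then obtain c where "\<forall>x. x \<notin> B \<longrightarrow> c x = 0" "lincomb H bs c = T"
        using cspan_lincomb[OF _ bs] by blast
      then show "T \<in> Cs n" using T N that unfolding Q_def by blast
    qed
  qed
  then show "\<exists>N. \<forall>n\<ge>N. Cs n = Cs N" by blast
qed

end

theorem proposition2p27:
  fixes H :: "'h hspace" and A :: "('h \<Rightarrow> 'h) set"
  assumes "chilbert H" and "von_neumann_algebra H A"
  shows "(dcc_VA H A \<longrightarrow> sober (Sigma_star H A)) \<and>
         (finite_dimensional H A \<longrightarrow> sober (Sigma_star H A))"
proof -
  interpret chilbert_space H by unfold_locales (rule assms(1))
  have dcc_sober: "sober (Sigma_star H A)" if "dcc_VA H A"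
    using sober_if_minimal_contexts dcc_VA_minimal[OF that] by blast
  show ?thesis using dcc_sober finite_dimensional_dcc by blast
qed

end
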